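(* Let $X$ be a shift space over a finite alphabet. If $X$ has the almost specification property, then $X$ is both boundedly supermultiplicative and balanced.
   Context: For a shift space $X\subseteq\mathcal{A}^{\mathbb{Z}}$ ($\mathcal{A}$ finite), $\mathcal{B}_n(X)$ denotes the set of words of length $n$ appearing in points of $X$, and $\mathcal{B}(X)=\bigcup_{n\ge1}\mathcal{B}_n(X)$. For $\omega\in\mathcal{B}(X)$ and $r\in\mathbb{N}$, $\mathcal{B}_{\omega,r}(X)$ is the set of words $u$ of length $r$ such that $\omega u\in\mathcal{B}(X)$. $X$ has the almost specification property if there is $N\ge1$ such that for all $u,v\in\mathcal{B}(X)$ there exists $w\in\mathcal{B}(X)$ with $|w|\le N$ and $uwv\in\mathcal{B}(X)$. $X$ is boundedly supermultiplicative if there is $K\ge1$ with $|\mathcal{B}_m(X)|\cdot|\mathcal{B}_n(X)|\le K|\mathcal{B}_{m+n}(X)|$ for all $m,n\ge1$. $X$ is balanced if there is $B>0$ such that $|\mathcal{B}_{\omega,r}(X)|/|\mathcal{B}_r(X)|\ge B$ for every $\omega\in\mathcal{B}(X)$ and every $r\in\mathbb{N}$. *)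

theory Defs
  imports Complex_Main
begin

text \<open>Points of the full shift over a finite alphabet 'a are maps int => 'a.\<close>

definition shift :: "(int \<Rightarrow> 'a) \<Rightarrow> (int \<Rightarrow> 'a)" where
  "shift x = (\<lambda>i. x (i + 1))"

text \<open>Closedness in the product topology, written out: a point all of whose
  central finite windows agree with points of X lies in X.\<close>
definition shift_space :: "(int \<Rightarrow> 'a::finite) set \<Rightarrow> bool" where
  "shift_space X \<longleftrightarrow>
     (\<forall>x. x \<in> X \<longleftrightarrow> shift x \<in> X) \<and>
     (\<forall>x. (\<forall>n::nat. \<exists>y\<in>X. \<forall>i. \<bar>i\<bar> \<le> int n \<longrightarrow> y i = x i) \<longrightarrow> x \<in> X)"

definition window :: "(int \<Rightarrow> 'a) \<Rightarrow> int \<Rightarrow> nat \<Rightarrow> 'a list" where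
  "window x i n = map (\<lambda>j. x (i + int j)) [0..<n]"

definition lang_n :: "(int \<Rightarrow> 'a) set \<Rightarrow> nat \<Rightarrow> 'a list set" where
  "lang_n X n = {w. \<exists>x\<in>X. \<exists>i. w = window x i n}"

definition lang :: "(int \<Rightarrow> 'a) set \<Rightarrow> 'a list set" where
  "lang X = (\<Union>n\<in>{1..}. lang_n X n)"

definition follower :: "(int \<Rightarrow> 'a) set \<Rightarrow> 'a list \<Rightarrow> nat \<Rightarrow> 'a list set" where
  "follower X \<omega> r = {u. length u = r \<and> \<omega> @ u \<in> lang X}"

definition almost_specification :: "(int \<Rightarrow> 'a) set \<Rightarrow> bool" where
  "almost_specification X \<longleftrightarrow>
     (\<exists>N::nat. N \<ge> 1 \<and> (\<forall>u\<in>lang X. \<forall>v\<in>lang X.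
        \<exists>w\<in>lang X. length w \<le> N \<and> u @ w @ v \<in> lang X))"

definition boundedly_supermultiplicative :: "(int \<Rightarrow> 'a) set \<Rightarrow> bool" where
  "boundedly_supermultiplicative X \<longleftrightarrow>
     (\<exists>K::real. K \<ge> 1 \<and> (\<forall>m n. m \<ge> 1 \<longrightarrow> n \<ge> 1 \<longrightarrow>
        real (card (lang_n X m)) * real (card (lang_n X n)) \<le> K * real (card (lang_n X (m + n)))))"

definition balanced :: "(int \<Rightarrow> 'a) set \<Rightarrow> bool" where
  "balanced X \<longleftrightarrow>
     (\<exists>B::real. B > 0 \<and> (\<forall>\<omega>\<in>lang X. \<forall>r::nat.
        real (card (follower X \<omega> r)) / real (card (lang_n X r)) \<ge> B))"

end

theory Submission
  imports Defs
begin

text \<open>Bridge every pair of words by a gap w of length at most N.  The glued word u w v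
  is determined by its prefix of length |u| + |v|, a word of X, and its remaining suffix,
  one of the K words of length at most N; hence the pairs (u, v) number at most K times the
  words of length |u| + |v|.  Likewise each word v of length r is recovered from the
  follower \<open>take r (w @ v)\<close> of \<omega> and a short suffix, so followers of \<omega> are at least a
  1/K fraction of all words of length r.\<close>

lemma length_lang_n: "w \<in> lang_n X n \<Longrightarrow> length w = n"
  by (auto simp: lang_n_def window_def)

lemma finite_lists_of_length: "finite {xs :: 'a::finite list. length xs = n}"
  using finite_lists_length_eq[of "UNIV :: 'a set" n] by simp

lemma finite_lang_n: "finite (lang_n (X :: (int \<Rightarrow> 'a::finite) set) n)"
  by (rule finite_subset[OF _ finite_lists_of_length[of n]]) (auto dest: length_lang_n)

lemma lang_n_nonempty: "x \<in> X \<Longrightarrow> lang_n X n \<noteq> {}"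
  by (auto simp: lang_n_def)

lemma take_in_lang_n: "w \<in> lang_n X n \<Longrightarrow> k \<le> n \<Longrightarrow> take k w \<in> lang_n X k"
proof -
  assume "w \<in> lang_n X n" "k \<le> n"
  then obtain x i where "x \<in> X" "w = window x i n"
    by (auto simp: lang_n_def)
  moreover have "take k (window x i n) = window x i k"
    using \<open>k \<le> n\<close> by (simp add: window_def take_map)
  ultimately show ?thesis
    by (auto simp: lang_n_def)
qed

lemma mem_lang_iff: "w \<in> lang X \<longleftrightarrow> length w \<ge> 1 \<and> w \<in> lang_n X (length w)"
  by (auto simp: lang_def dest: length_lang_n)

lemma take_in_lang: "w \<in> lang X \<Longrightarrow> 1 \<le> k \<Longrightarrow> k \<le> length w \<Longrightarrow> take k w \<in> lang X"
  by (auto simp: mem_lang_iff intro: take_in_lang_n)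

lemma finite_follower: "finite (follower (X :: (int \<Rightarrow> 'a::finite) set) \<omega> r)"
  by (rule finite_subset[OF _ finite_lists_of_length[of r]]) (auto simp: follower_def)

lemma finite_short_words: "finite {t :: 'a::finite list. length t \<le> N}"
  using finite_lists_length_le[of "UNIV :: 'a set" N] by simp

lemma card_short_words_pos: "card {t :: 'a::finite list. length t \<le> N} \<ge> 1"
proof -
  have "[] \<in> {t :: 'a list. length t \<le> N}"
    by simp
  then show ?thesis
    using finite_short_words[of N] by (metis card_0_eq empty_iff less_one not_le)
qed

lemma card_le_if_covered_by_short_extensions:
  fixes A :: "'a::finite list set"
  assumes "finite A"
    and "\<And>b. b \<in> B \<Longrightarrow> \<exists>p\<in>A. \<exists>t. length t \<le> N \<and> b = g (p @ t)"
  shows "card B \<le> card A * card {t :: 'a list. length t \<le> N}"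
proof -
  let ?T = "{t :: 'a list. length t \<le> N}"
  have "B \<subseteq> (\<lambda>(p, t). g (p @ t)) ` (A \<times> ?T)"
    using assms(2) by fastforce
  then have "card B \<le> card ((\<lambda>(p, t). g (p @ t)) ` (A \<times> ?T))"
    by (intro card_mono finite_imageI) (simp_all add: assms(1) finite_short_words)
  also have "\<dots> \<le> card (A \<times> ?T)"
    by (rule card_image_le) (simp add: assms(1) finite_short_words)
  finally show ?thesis
    by (simp add: card_cartesian_product)
qed

lemma supermultiplicative_card_lang_n:
  fixes X :: "(int \<Rightarrow> 'a::finite) set"
  assumes gap: "\<And>u v. u \<in> lang X \<Longrightarrow> v \<in> lang X \<Longrightarrow> \<exists>w. length w \<le> N \<and> u @ w @ v \<in> lang X"
    and "m \<ge> 1" "n \<ge> 1"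
  shows "card (lang_n X m) * card (lang_n X n)
           \<le> card (lang_n X (m + n)) * card {t :: 'a list. length t \<le> N}"
proof -
  let ?split = "\<lambda>z :: 'a list. (take m z, drop (length z - n) z)"
  have "card (lang_n X m \<times> lang_n X n) \<le> card (lang_n X (m + n)) * card {t :: 'a list. length t \<le> N}"
  proof (rule card_le_if_covered_by_short_extensions[OF finite_lang_n])
    fix uv assume "uv \<in> lang_n X m \<times> lang_n X n"
    then obtain u v where uv: "uv = (u, v)" "u \<in> lang_n X m" "v \<in> lang_n X n"
      by auto
    have len: "length u = m" "length v = n"
      using uv by (auto dest: length_lang_n)
    then obtain w where w: "length w \<le> N" "u @ w @ v \<in> lang X"
      using gap[of u v] uv assms(2,3) by (auto simp: mem_lang_iff)
    let ?z = "u @ w @ v"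
    have "take (m + n) ?z \<in> lang_n X (m + n)"
      using w(2) len take_in_lang_n[of ?z X "length ?z" "m + n"] by (simp add: mem_lang_iff)
    moreover have "length (drop (m + n) ?z) \<le> N"
      using w(1) len by simp
    moreover have "uv = ?split (take (m + n) ?z @ drop (m + n) ?z)"
      using uv(1) len by (simp only: append_take_drop_id) simp
    ultimately show "\<exists>p\<in>lang_n X (m + n). \<exists>t. length t \<le> N \<and> uv = ?split (p @ t)"
      by blast
  qed
  then show ?thesis
    by (simp add: card_cartesian_product)
qed

lemma card_lang_n_le_card_follower:
  fixes X :: "(int \<Rightarrow> 'a::finite) set"
  assumes gap: "\<And>u v. u \<in> lang X \<Longrightarrow> v \<in> lang X \<Longrightarrow> \<exists>w. length w \<le> N \<and> u @ w @ v \<in> lang X"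
    and \<omega>: "\<omega> \<in> lang X"
  shows "card (lang_n X r) \<le> card (follower X \<omega> r) * card {t :: 'a list. length t \<le> N}"
proof (rule card_le_if_covered_by_short_extensions[OF finite_follower])
  fix v assume v: "v \<in> lang_n X r"
  have len: "length v = r"
    using v by (rule length_lang_n)
  obtain w where w: "length w \<le> N" "\<omega> @ w @ v \<in> lang X"
  proof (cases "r = 0")
    \<comment> \<open>\<open>lang X\<close> excludes the empty word, so the gap property does not apply; no gap is needed\<close>
    case True
    then show thesis
      using that[of "[]"] \<omega> len by simp
  next
    case False
    then show thesis
      using that gap[of \<omega> v] \<omega> v len by (auto simp: mem_lang_iff)
  qed
  have "\<omega> @ take r (w @ v) = take (length \<omega> + r) (\<omega> @ w @ v)"
    by simp
  also have "\<dots> \<in> lang X"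
    using \<omega> w(2) len by (intro take_in_lang) (auto simp: mem_lang_iff)
  finally have "take r (w @ v) \<in> follower X \<omega> r"
    using len by (simp add: follower_def)
  moreover have "length (drop r (w @ v)) \<le> N"
    using w(1) len by simp
  moreover have "v = (\<lambda>z. drop (length z - r) z) (take r (w @ v) @ drop r (w @ v))"
    using len by (simp only: append_take_drop_id) simp
  ultimately show "\<exists>p\<in>follower X \<omega> r. \<exists>t. length t \<le> N \<and> v = (\<lambda>z. drop (length z - r) z) (p @ t)"
    by blast
qed

theorem theorem3p7:
  fixes X :: "(int \<Rightarrow> 'a::finite) set"
  assumes "shift_space X" and "almost_specification X"
  shows "boundedly_supermultiplicative X \<and> balanced X"
proof -
  obtain N where gap: "\<And>u v. u \<in> lang X \<Longrightarrow> v \<in> lang X \<Longrightarrow> \<exists>w. length w \<le> N \<and> u @ w @ v \<in> lang X"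
    using assms(2) unfolding almost_specification_def by blast
  define K where "K = card {t :: 'a list. length t \<le> N}"
  have K: "K \<ge> 1"
    unfolding K_def by (rule card_short_words_pos)
  have "boundedly_supermultiplicative X"
    unfolding boundedly_supermultiplicative_def
    using K supermultiplicative_card_lang_n[OF gap, folded K_def]
    by (intro exI[of _ "real K"]) (auto simp: mult.commute simp flip: of_nat_mult)
  moreover have "balanced X"
    unfolding balanced_def
  proof (intro exI[of _ "1 / real K"] conjI ballI allI)
    fix \<omega> r assume \<omega>: "\<omega> \<in> lang X"
    then have "card (lang_n X r) > 0"
      using finite_lang_n lang_n_nonempty by (fastforce simp: lang_def lang_n_def card_gt_0_iff)
    moreover have "real (card (lang_n X r)) \<le> real (card (follower X \<omega> r)) * real K"
      using card_lang_n_le_card_follower[OF gap \<omega>, of r] unfolding K_def by (simp flip: of_nat_mult)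
    ultimately show "1 / real K \<le> real (card (follower X \<omega> r)) / real (card (lang_n X r))"
      using K by (simp add: field_simps)
  qed (use K in simp)
  ultimately show ?thesis ..
qed

end
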